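(* Let $\mu$ be a monotone system over $\{0,1\}^V$ and $\theta\in(0,1)$, $T_1,T_2\ge1$. Let $(X^{(t)}_{\mu\text{-GD}})_{t\ge0}$ be the Glauber dynamics for $\mu$ started from $X^{(0)}_{\mu\text{-GD}}=\mathbf 1_V$, and let $(X^{(t)}_{\mathrm{alg}})_{t=0}^{T_1T_2}$ be the Markov chain generated by $\mathcal A_\mu(\theta,T_1,T_2)$. Then for every integer $0\le t\le T_1T_2$, \[ d_{\mathrm{TV}}(X^{(t)}_{\mu\text{-GD}},\mu)\le d_{\mathrm{TV}}(\mathsf{contr}(X^{(t)}_{\mathrm{alg}}),\mu), \] where $d_{\mathrm{TV}}$ between a random variable and a distribution means between its law and the distribution.
   Context: Partial order on $\{0,1\}^S$: coordinatewise. Monotone system: for every $v\in V$ and all feasible (positive-probability) $\sigma\preceq\tau$ in $\{0,1\}^{V\setminus\{v\}}$, $\mu^\sigma_v(1)\le\mu^\tau_v(1)$, where $\mu^\sigma_v$ is the conditional marginal at $v$. Glauber dynamics for $\mu$: pick $v$ uniformly, resample $X_v\sim\mu_v^{X_{V\setminus\{v\}}}$. Tilted distribution $(\theta*\mu)(\sigma)\propto\mu(\sigma)\theta^{\|\sigma\|_1}$. $\mathsf{lift}:\{0,1\}^V\to\{0,1,\star\}^V$ is random: independently per coordinate, $0\mapsto0$, $1\mapsto\star$ w.p. $1-\theta$ and $1\mapsto1$ w.p. $\theta$. $\mathsf{contr}$ maps $0\mapsto0$ and $1,\star\mapsto1$ coordinatewise. Algorithm $\mathcal A_\mu(\theta,T_1,T_2)$: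 set $X=\mathsf{lift}(\mathbf 1_V)$; repeat $T_1$ times: (a) $X\gets\mathsf{contr}(X)$; (b) $X\gets\mathsf{lift}(X)$, $S=\{v:X_v\ne\star\}$; (c) repeat $T_2$ times: pick $v\in V$ uniformly; if $v\in S$ resample $X_v\sim(\theta*\mu)_v^{\sigma_{V\setminus\{v\}}}$ with $\sigma=\mathsf{contr}(X)$, otherwise keep $X_v=\star$. $X^{(0)}_{\mathrm{alg}}=\mathsf{lift}(\mathbf 1_V)$ and $X^{(t)}_{\mathrm{alg}}$ is the state after the $t$-th single-site step in (c). *)

theory Defs
  imports "HOL-Probability.Probability"
begin

text \<open>Vertex set V = UNIV of a finite type 'v; a configuration in {0,1}^V is a
  function 'v => bool (True = 1). Distributions are pmfs.\<close>

datatype tri = Zero | One | Star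

text \<open>Conditional marginal mu^sigma_v(1); the value of sigma at v is ignored.\<close>
definition cond1 :: "('v \<Rightarrow> bool) pmf \<Rightarrow> 'v \<Rightarrow> ('v \<Rightarrow> bool) \<Rightarrow> real" where
  "cond1 \<mu> v \<sigma> = pmf \<mu> (\<sigma>(v := True)) / (pmf \<mu> (\<sigma>(v := True)) + pmf \<mu> (\<sigma>(v := False)))"

text \<open>sigma restricted to V - {v} has positive probability.\<close>
definition feasible_at :: "('v \<Rightarrow> bool) pmf \<Rightarrow> 'v \<Rightarrow> ('v \<Rightarrow> bool) \<Rightarrow> bool" where
  "feasible_at \<mu> v \<sigma> \<longleftrightarrow> pmf \<mu> (\<sigma>(v := True)) + pmf \<mu> (\<sigma>(v := False)) > 0"

definition monotone_system :: "('v \<Rightarrow> bool) pmf \<Rightarrow> bool" where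
  "monotone_system \<mu> \<longleftrightarrow>
     (\<forall>v \<sigma> \<tau>. (\<forall>u. u \<noteq> v \<longrightarrow> \<sigma> u \<longrightarrow> \<tau> u) \<and> feasible_at \<mu> v \<sigma> \<and> feasible_at \<mu> v \<tau>
        \<longrightarrow> cond1 \<mu> v \<sigma> \<le> cond1 \<mu> v \<tau>)"

definition tilt :: "real \<Rightarrow> ('v::finite \<Rightarrow> bool) pmf \<Rightarrow> ('v \<Rightarrow> bool) pmf" where
  "tilt \<theta> \<mu> = embed_pmf (\<lambda>\<sigma>. pmf \<mu> \<sigma> * \<theta> ^ card {v. \<sigma> v} /
       (\<Sum>\<rho>\<in>UNIV. pmf \<mu> \<rho> * \<theta> ^ card {v. \<rho> v}))"

definition glauber_step :: "('v::finite \<Rightarrow> bool) pmf \<Rightarrow> ('v \<Rightarrow> bool) \<Rightarrow> ('v \<Rightarrow> bool) pmf" where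
  "glauber_step \<mu> x = do { v \<leftarrow> pmf_of_set UNIV; b \<leftarrow> bernoulli_pmf (cond1 \<mu> v x); return_pmf (x(v := b)) }"

fun glauber :: "('v::finite \<Rightarrow> bool) pmf \<Rightarrow> nat \<Rightarrow> ('v \<Rightarrow> bool) pmf" where
  "glauber \<mu> 0 = return_pmf (\<lambda>_. True)"
| "glauber \<mu> (Suc t) = glauber \<mu> t \<bind> glauber_step \<mu>"

definition lift :: "real \<Rightarrow> ('v::finite \<Rightarrow> bool) \<Rightarrow> ('v \<Rightarrow> tri) pmf" where
  "lift \<theta> x = Pi_pmf UNIV Zero
     (\<lambda>v. if x v then map_pmf (\<lambda>b. if b then One else Star) (bernoulli_pmf \<theta>) else return_pmf Zero)"

definition contr :: "('v \<Rightarrow> tri) \<Rightarrow> ('v \<Rightarrow> bool)" where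
  "contr X = (\<lambda>v. X v \<noteq> Zero)"

text \<open>One single-site step of phase (c): S = non-star sites.\<close>
definition alg_step :: "real \<Rightarrow> ('v::finite \<Rightarrow> bool) pmf \<Rightarrow> ('v \<Rightarrow> tri) \<Rightarrow> ('v \<Rightarrow> tri) pmf" where
  "alg_step \<theta> \<mu> X = do {
     v \<leftarrow> pmf_of_set UNIV;
     if X v = Star then return_pmf X
     else do { b \<leftarrow> bernoulli_pmf (cond1 (tilt \<theta> \<mu>) v (contr X));
               return_pmf (X(v := (if b then One else Zero))) } }"

text \<open>Law of X^(t)_alg: X^(0) = lift(1); step t+1 is step (t mod T2)+1 of round
  (t div T2)+1, which is preceded by contr and lift when t mod T2 = 0.\<close>
fun alg :: "real \<Rightarrow> ('v::finite \<Rightarrow> bool) pmf \<Rightarrow> nat \<Rightarrow> nat \<Rightarrow> ('v \<Rightarrow> tri) pmf" where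
  "alg \<theta> \<mu> T2 0 = lift \<theta> (\<lambda>_. True)"
| "alg \<theta> \<mu> T2 (Suc t) =
     (if t mod T2 = 0 then alg \<theta> \<mu> T2 t \<bind> (\<lambda>X. lift \<theta> (contr X)) else alg \<theta> \<mu> T2 t)
       \<bind> alg_step \<theta> \<mu>"

definition tv_dist :: "'a pmf \<Rightarrow> 'a pmf \<Rightarrow> real" where
  "tv_dist p q = (SUP A. \<bar>measure_pmf.prob p A - measure_pmf.prob q A\<bar>)"

end

theory Submission
  imports Defs
begin

text \<open>Let \<open>\<nu>\<^sub>t\<close> be the law of the Glauber chain and \<open>X\<^sub>t\<close> the state of the algorithm after
  \<open>t\<close> single-site steps. Because \<open>\<mu>\<close> is monotone, a heat-bath step preserves the property
  that \<open>\<nu>\<^sub>t/\<mu>\<close> is increasing, which holds for the point mass at the all-ones configuration.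
  Order \<open>{0, 1, \<star>}\<close> by \<open>0 < 1 < \<star>\<close> and write \<open>\<Lambda>F(x) = E F(lift x)\<close>
  (\<open>lifted \<theta> F\<close> below). Then
  \<open>E\<^bsub>\<nu>\<^sub>t\<^esub> \<Lambda>F \<le> E F(X\<^sub>t)\<close> for every increasing \<open>F\<close>, by induction on \<open>t\<close>: against an
  increasing \<open>F\<close> and a law with increasing ratio, a Glauber step followed by lifting is
  dominated by lifting followed by an algorithm step; an algorithm step preserves increasing
  functions; and contracting and re-lifting at the start of a round replaces \<open>F\<close> by the
  increasing function \<open>\<Lambda>F \<circ> contr\<close>, which lifts back to \<open>\<Lambda>F\<close>. Finally the set \<open>U\<close> where
  \<open>\<nu>\<^sub>t\<close> exceeds \<open>\<mu>\<close> is an up-set, so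
  \<open>d\<^sub>T\<^sub>V(\<nu>\<^sub>t, \<mu>) = \<nu>\<^sub>t(U) - \<mu>(U) \<le> P(contr X\<^sub>t \<in> U) - \<mu>(U) \<le> d\<^sub>T\<^sub>V(contr X\<^sub>t, \<mu>)\<close>.\<close>

section \<open>Expectations over finite types\<close>

text \<open>A finite sum, which avoids the integrability side conditions of the Bochner integral.\<close>

definition expect :: "'a::finite pmf \<Rightarrow> ('a \<Rightarrow> real) \<Rightarrow> real" where
  "expect p f = (\<Sum>x\<in>UNIV. pmf p x * f x)"

lemma pmf_bind_finite: "pmf (bind_pmf p K) y = (\<Sum>x\<in>UNIV. pmf p x * pmf (K x) y)"
  for p :: "'a::finite pmf"
  by (simp add: pmf_bind integral_measure_pmf_real[of UNIV] mult.commute)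

lemma expect_bind: "expect (bind_pmf p K) f = expect p (\<lambda>x. expect (K x) f)"
  for p :: "'a::finite pmf" and K :: "'a \<Rightarrow> 'b::finite pmf"
proof -
  have "expect (bind_pmf p K) f = (\<Sum>y\<in>UNIV. \<Sum>x\<in>UNIV. pmf p x * pmf (K x) y * f y)"
    by (simp add: expect_def pmf_bind_finite sum_distrib_right)
  also have "\<dots> = (\<Sum>x\<in>UNIV. \<Sum>y\<in>UNIV. pmf p x * pmf (K x) y * f y)"
    by (rule sum.swap)
  finally show ?thesis
    by (simp add: expect_def sum_distrib_left mult.assoc)
qed

lemma expect_return [simp]: "expect (return_pmf x) f = f x"
proof -
  have "expect (return_pmf x) f = (\<Sum>y\<in>UNIV. (if y = x then f x else 0))"
    unfolding expect_def by (intro sum.cong) (auto simp: pmf_return)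
  then show ?thesis by simp
qed

lemma expect_map: "expect (map_pmf g p) f = expect p (\<lambda>x. f (g x))"
  for p :: "'a::finite pmf" and g :: "'a \<Rightarrow> 'b::finite"
  by (simp add: map_pmf_def expect_bind)

lemma expect_bernoulli:
  "0 \<le> p \<Longrightarrow> p \<le> 1 \<Longrightarrow> expect (bernoulli_pmf p) f = p * f True + (1 - p) * f False"
  by (simp add: expect_def UNIV_bool)

lemma expect_uniform:
  "expect (pmf_of_set UNIV) f = (\<Sum>x\<in>UNIV. f x) / CARD('a)"
  for f :: "'a::finite \<Rightarrow> real"
  by (simp add: expect_def sum_divide_distrib)

lemma expect_mono:
  assumes "\<And>x. x \<in> set_pmf p \<Longrightarrow> f x \<le> g x"
  shows "expect p f \<le> expect p g"
  unfolding expect_def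
proof (intro sum_mono)
  fix x
  show "pmf p x * f x \<le> pmf p x * g x"
    using assms[of x] by (cases "x \<in> set_pmf p") (auto simp: set_pmf_iff intro: mult_left_mono)
qed

lemma expect_cong: "(\<And>x. x \<in> set_pmf p \<Longrightarrow> f x = g x) \<Longrightarrow> expect p f = expect p g"
  by (simp add: expect_mono order_antisym)

lemma expect_const [simp]: "expect p (\<lambda>_. c) = c"
  by (simp add: expect_def sum_pmf_eq_1 flip: sum_distrib_right)

lemma expect_add: "expect p (\<lambda>x. f x + g x) = expect p f + expect p g"
  by (simp add: expect_def distrib_left sum.distrib)

lemma expect_cmult: "expect p (\<lambda>x. c * f x) = c * expect p f"
  by (simp add: expect_def sum_distrib_left mult.left_commute)

lemma expect_sum: "expect p (\<lambda>x. \<Sum>i\<in>I. f i x) = (\<Sum>i\<in>I. expect p (f i))"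
  by (simp add: expect_def sum_distrib_left sum.swap[of _ I])

lemma expect_divide: "expect p (\<lambda>x. f x / c) = expect p f / c"
  by (simp add: expect_def sum_divide_distrib)

lemma expect_indicator: "expect p (indicator A) = measure_pmf.prob p A"
  for p :: "'a::finite pmf"
  by (simp add: expect_def measure_measure_pmf_finite indicator_def sum.If_cases)

lemma pmf_eq_expect: "pmf p y = expect p (\<lambda>z. if z = y then 1 else 0)"
  by (simp add: expect_def if_distrib cong: if_cong)

section \<open>Configurations and conditional marginals\<close>

lemma UNIV_tri: "(UNIV :: tri set) = {Zero, One, Star}"
  by (auto intro: tri.exhaust)

instance tri :: finite
  by standard (simp add: UNIV_tri)

fun tri_rank :: "tri \<Rightarrow> nat" where
  "tri_rank Zero = 0" | "tri_rank One = 1" | "tri_rank Star = 2"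

text \<open>A \<open>Star\<close> site is frozen at 1 by the algorithm, so it sits above both values
  that a live site can take.\<close>

instantiation tri :: linorder
begin

definition less_eq_tri :: "tri \<Rightarrow> tri \<Rightarrow> bool" where
  "a \<le> b \<longleftrightarrow> tri_rank a \<le> tri_rank b"

definition less_tri :: "tri \<Rightarrow> tri \<Rightarrow> bool" where
  "a < b \<longleftrightarrow> tri_rank a < tri_rank b"

instance
proof
  fix a b :: tri
  show "a \<le> b \<Longrightarrow> b \<le> a \<Longrightarrow> a = b"
    unfolding less_eq_tri_def by (cases a; cases b) auto
qed (auto simp: less_eq_tri_def less_tri_def)

end

lemma Star_le_iff [simp]: "Star \<le> b \<longleftrightarrow> b = Star"
  by (cases b) (auto simp: less_eq_tri_def)

lemma le_Star [simp]: "b \<le> Star"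
  by (cases b) (auto simp: less_eq_tri_def)

lemma le_Zero_iff [simp]: "b \<le> Zero \<longleftrightarrow> b = Zero"
  by (cases b) (auto simp: less_eq_tri_def)

lemma contr_mono: "X \<le> Y \<Longrightarrow> contr X \<le> contr Y"
  unfolding contr_def le_fun_def le_bool_def by (metis le_Zero_iff)

lemma contr_fun_upd [simp]: "contr (X(v := b)) = (contr X)(v := b \<noteq> Zero)"
  by (auto simp: contr_def fun_eq_iff)

text \<open>The configurations the Glauber chain can visit: the support of \<open>\<mu>\<close> and the
  all-ones starting configuration, which need not lie in it.\<close>

definition admissible :: "('v \<Rightarrow> bool) pmf \<Rightarrow> ('v \<Rightarrow> bool) set" where
  "admissible \<mu> = insert (\<lambda>_. True) (set_pmf \<mu>)"

lemma admissibleI: "0 < pmf \<mu> z \<Longrightarrow> z \<in> admissible \<mu>"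
  by (simp add: admissible_def set_pmf_iff)

lemma cond1_nonneg: "0 \<le> cond1 \<mu> v \<sigma>"
  by (simp add: cond1_def)

lemma cond1_le_1: "cond1 \<mu> v \<sigma> \<le> 1"
  unfolding cond1_def by (smt (verit) divide_le_eq_1 pmf_nonneg)

lemma cond1_fun_upd [simp]: "cond1 \<mu> v (x(v := b)) = cond1 \<mu> v x"
  by (simp add: cond1_def)

lemma feasible_at_admissible:
  assumes "\<forall>v. feasible_at \<mu> v (\<lambda>_. True)" and "z \<in> admissible \<mu>"
  shows "feasible_at \<mu> v z"
proof (cases "z = (\<lambda>_. True)")
  case False
  then have "0 < pmf \<mu> (z(v := z v))"
    using assms(2) by (simp add: admissible_def pmf_positive)
  then show ?thesis
    unfolding feasible_at_def by (cases "z v") (auto intro: add_pos_nonneg add_nonneg_pos)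
qed (use assms in simp)

lemma cond1_pos_iff:
  "feasible_at \<mu> v x \<Longrightarrow> 0 < cond1 \<mu> v x \<longleftrightarrow> 0 < pmf \<mu> (x(v := True))"
  by (auto simp: cond1_def feasible_at_def zero_less_divide_iff)

lemma cond1_less_1_iff:
  "feasible_at \<mu> v x \<Longrightarrow> cond1 \<mu> v x < 1 \<longleftrightarrow> 0 < pmf \<mu> (x(v := False))"
  by (auto simp: cond1_def feasible_at_def divide_less_eq_1)

lemma frac_le_frac_iff_cross:
  fixes p q r s :: real
  assumes "0 \<le> p" "0 \<le> q" "0 \<le> r" "0 \<le> s" "0 < q + p" "0 < s + r"
  shows "q / (q + p) \<le> s / (s + r) \<longleftrightarrow> q * r \<le> s * p"
  using assms by (simp add: divide_le_eq le_divide_eq algebra_simps)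

lemma monotone_system_cross:
  assumes "monotone_system \<mu>" "x \<le> y" "feasible_at \<mu> v x" "feasible_at \<mu> v y"
  shows "pmf \<mu> (x(v := True)) * pmf \<mu> (y(v := False)) \<le> pmf \<mu> (y(v := True)) * pmf \<mu> (x(v := False))"
proof -
  have "cond1 \<mu> v x \<le> cond1 \<mu> v y"
    using assms unfolding monotone_system_def le_fun_def le_bool_def by blast
  then show ?thesis
    using assms(3,4) unfolding cond1_def feasible_at_def by (subst (asm) frac_le_frac_iff_cross) auto
qed

section \<open>The tilted distribution\<close>

definition tilt_norm :: "real \<Rightarrow> ('v::finite \<Rightarrow> bool) pmf \<Rightarrow> real" where
  "tilt_norm \<theta> \<mu> = (\<Sum>\<rho>\<in>UNIV. pmf \<mu> \<rho> * \<theta> ^ card {v. \<rho> v})"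

lemma tilt_norm_pos: "0 < \<theta> \<Longrightarrow> 0 < tilt_norm \<theta> \<mu>"
proof -
  assume \<theta>: "0 < \<theta>"
  obtain \<rho> where "\<rho> \<in> set_pmf \<mu>" using set_pmf_not_empty[of \<mu>] by blast
  then have "0 < pmf \<mu> \<rho> * \<theta> ^ card {v. \<rho> v}" using \<theta> by (simp add: pmf_positive)
  then show ?thesis unfolding tilt_norm_def
    by (intro sum_pos2[of UNIV \<rho>]) (auto simp: \<theta> less_imp_le)
qed

lemma pmf_tilt: "0 < \<theta> \<Longrightarrow> pmf (tilt \<theta> \<mu>) \<sigma> = pmf \<mu> \<sigma> * \<theta> ^ card {v. \<sigma> v} / tilt_norm \<theta> \<mu>"
  unfolding tilt_def tilt_norm_def[symmetric]
proof (rule pmf_embed_pmf)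
  assume \<theta>: "0 < \<theta>"
  note Z = tilt_norm_pos[OF \<theta>, of \<mu>]
  show "0 \<le> pmf \<mu> x * \<theta> ^ card {v. x v} / tilt_norm \<theta> \<mu>" for x
    using \<theta> Z by simp
  have "(\<Sum>x\<in>UNIV. pmf \<mu> x * \<theta> ^ card {v. x v} / tilt_norm \<theta> \<mu>) = 1"
    using Z by (simp add: tilt_norm_def flip: sum_divide_distrib)
  then show "(\<integral>\<^sup>+ x. ennreal (pmf \<mu> x * \<theta> ^ card {v. x v} / tilt_norm \<theta> \<mu>) \<partial>count_space UNIV) = 1"
    using \<theta> Z by (simp add: nn_integral_count_space_finite sum_ennreal)
qed

lemma card_fun_upd_True: "card {u. (x(v := True)) u} = Suc (card {u. (x(v := False)) u})"
  for x :: "'v::finite \<Rightarrow> bool"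
proof -
  have "{u. (x(v := True)) u} = insert v {u. (x(v := False)) u}" by auto
  then show ?thesis by simp
qed

lemma cond1_tilt:
  assumes "0 < \<theta>"
  shows "cond1 (tilt \<theta> \<mu>) v x =
    \<theta> * pmf \<mu> (x(v := True)) / (\<theta> * pmf \<mu> (x(v := True)) + pmf \<mu> (x(v := False)))"
proof -
  define c where "c = \<theta> ^ card {u. (x(v := False)) u} / tilt_norm \<theta> \<mu>"
  have "c > 0"
    unfolding c_def using assms tilt_norm_pos[OF assms] by (intro divide_pos_pos zero_less_power)
  have "cond1 (tilt \<theta> \<mu>) v x = c * (\<theta> * pmf \<mu> (x(v := True))) /
      (c * (\<theta> * pmf \<mu> (x(v := True)) + pmf \<mu> (x(v := False))))"
    unfolding cond1_def pmf_tilt[OF assms] card_fun_upd_True c_def by (simp add: algebra_simps)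
  then show ?thesis using \<open>c > 0\<close> by simp
qed

lemma scaled_sum_pos:
  fixes p q \<theta> :: real
  assumes "0 < q + p" "0 \<le> p" "0 \<le> q" "0 < \<theta>"
  shows "0 < \<theta> * q + p"
  using assms by (cases "q = 0") (auto intro: add_pos_nonneg)

lemma cond1_tilt_mono:
  assumes "monotone_system \<mu>" "x \<le> y" "feasible_at \<mu> v x" "feasible_at \<mu> v y" "0 < \<theta>"
  shows "cond1 (tilt \<theta> \<mu>) v x \<le> cond1 (tilt \<theta> \<mu>) v y"
proof -
  define q p s r where "q = pmf \<mu> (x(v := True))" and "p = pmf \<mu> (x(v := False))"
    and "s = pmf \<mu> (y(v := True))" and "r = pmf \<mu> (y(v := False))"
  have "q * r \<le> s * p"
    using monotone_system_cross[OF assms(1-4)] by (simp add: p_def q_def r_def s_def)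
  moreover have "0 < q + p" "0 < s + r" "0 \<le> p" "0 \<le> q" "0 \<le> r" "0 \<le> s"
    using assms(3,4) by (simp_all add: feasible_at_def p_def q_def r_def s_def)
  moreover note scaled_sum_pos[OF _ _ _ assms(5)]
  ultimately have "\<theta> * q / (\<theta> * q + p) \<le> \<theta> * s / (\<theta> * s + r)"
    using assms(5) by (subst frac_le_frac_iff_cross) auto
  then show ?thesis
    using assms(5) by (simp add: cond1_tilt p_def q_def r_def s_def)
qed

lemma cond1_tilt_pos_iff:
  assumes "feasible_at \<mu> v x" "0 < \<theta>"
  shows "0 < cond1 (tilt \<theta> \<mu>) v x \<longleftrightarrow> 0 < pmf \<mu> (x(v := True))"
proof -
  have "0 < \<theta> * pmf \<mu> (x(v := True)) + pmf \<mu> (x(v := False))"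
    using assms by (intro scaled_sum_pos) (auto simp: feasible_at_def add.commute)
  then show ?thesis using assms(2) by (simp add: cond1_tilt zero_less_divide_iff zero_less_mult_iff)
qed

lemma cond1_tilt_less_1_iff:
  assumes "feasible_at \<mu> v x" "0 < \<theta>"
  shows "cond1 (tilt \<theta> \<mu>) v x < 1 \<longleftrightarrow> 0 < pmf \<mu> (x(v := False))"
proof -
  have "0 < \<theta> * pmf \<mu> (x(v := True)) + pmf \<mu> (x(v := False))"
    using assms by (intro scaled_sum_pos) (auto simp: feasible_at_def add.commute)
  then show ?thesis using assms(2) by (simp add: cond1_tilt divide_less_eq_1)
qed

section \<open>Lifting\<close>

definition bernoulli_field :: "real \<Rightarrow> ('v::finite \<Rightarrow> bool) pmf" where
  "bernoulli_field \<theta> = Pi_pmf UNIV False (\<lambda>_. bernoulli_pmf \<theta>)"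

definition lift_with :: "('v \<Rightarrow> bool) \<Rightarrow> ('v \<Rightarrow> bool) \<Rightarrow> ('v \<Rightarrow> tri)" where
  "lift_with x B = (\<lambda>v. if x v then (if B v then One else Star) else Zero)"

lemma contr_lift_with [simp]: "contr (lift_with x B) = x"
  by (auto simp: contr_def lift_with_def fun_eq_iff)

lemma lift_with_fun_upd:
  "lift_with x (B(v := b)) = (lift_with x B)(v := (if x v then (if b then One else Star) else Zero))"
  by (auto simp: lift_with_def fun_eq_iff)

lemma lift_with_mono: "x \<le> y \<Longrightarrow> lift_with x B \<le> lift_with y B"
  by (auto simp: lift_with_def le_fun_def less_eq_tri_def)

lemma lift_eq_map_bernoulli_field: "lift \<theta> x = map_pmf (lift_with x) (bernoulli_field \<theta>)"
proof -
  have "lift \<theta> x = Pi_pmf UNIV Zero (\<lambda>v. bernoulli_pmf \<theta> \<bind>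
      (\<lambda>c. return_pmf (if x v then (if c then One else Star) else Zero)))"
    unfolding lift_def by (intro Pi_pmf_cong) (auto simp: map_pmf_def bind_pmf_const)
  also have "\<dots> = bernoulli_field \<theta> \<bind> (\<lambda>B. Pi_pmf UNIV Zero
      (\<lambda>v. return_pmf (if x v then (if B v then One else Star) else Zero)))"
    unfolding bernoulli_field_def by (rule Pi_pmf_bind) simp
  finally show ?thesis
    by (simp add: map_pmf_def lift_with_def)
qed

lemma expect_bernoulli_field_resample:
  fixes v :: "'v::finite"
  assumes "0 \<le> \<theta>" "\<theta> \<le> 1"
  shows "expect (bernoulli_field \<theta>) G =
    \<theta> * expect (bernoulli_field \<theta>) (\<lambda>B. G (B(v := True))) +
    (1 - \<theta>) * expect (bernoulli_field \<theta>) (\<lambda>B. G (B(v := False)))"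
proof -
  define rest where "rest = Pi_pmf (UNIV - {v}) False (\<lambda>_::'v. bernoulli_pmf \<theta>)"
  have "bernoulli_field \<theta> = Pi_pmf (insert v (UNIV - {v})) False (\<lambda>_::'v. bernoulli_pmf \<theta>)"
    unfolding bernoulli_field_def by (simp add: insert_absorb)
  also have "\<dots> = bernoulli_pmf \<theta> \<bind> (\<lambda>b. rest \<bind> (\<lambda>B. return_pmf (B(v := b))))"
    unfolding rest_def by (rule Pi_pmf_insert') auto
  finally have split: "bernoulli_field \<theta> = \<dots>" .
  have "expect (bernoulli_field \<theta>) (\<lambda>B. G (B(v := b))) = expect rest (\<lambda>B. G (B(v := b)))" for b
    by (simp add: split expect_bind expect_bernoulli assms flip: distrib_right)
  then show ?thesis
    by (simp add: split expect_bind expect_bernoulli assms)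
qed

definition lifted :: "real \<Rightarrow> (('v::finite \<Rightarrow> tri) \<Rightarrow> real) \<Rightarrow> ('v \<Rightarrow> bool) \<Rightarrow> real" where
  "lifted \<theta> F x = expect (lift \<theta> x) F"

definition lifted_at :: "real \<Rightarrow> (('v::finite \<Rightarrow> tri) \<Rightarrow> real) \<Rightarrow> ('v \<Rightarrow> bool) \<Rightarrow> 'v \<Rightarrow> tri \<Rightarrow> real" where
  "lifted_at \<theta> F x v b = expect (bernoulli_field \<theta>) (\<lambda>B. F ((lift_with x B)(v := b)))"

lemma lifted_eq: "lifted \<theta> F x = expect (bernoulli_field \<theta>) (\<lambda>B. F (lift_with x B))"
  by (simp add: lifted_def lift_eq_map_bernoulli_field expect_map)

lemma lifted_contr [simp]: "lifted \<theta> (\<lambda>X. G (contr X)) = G"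
  by (simp add: lifted_eq fun_eq_iff)

lemma lifted_at_fun_upd [simp]: "lifted_at \<theta> F (x(v := c)) v b = lifted_at \<theta> F x v b"
proof -
  have "(lift_with (x(v := c)) B)(v := b) = (lift_with x B)(v := b)" for B
    by (auto simp: lift_with_def fun_eq_iff)
  then show ?thesis by (simp add: lifted_at_def)
qed

lemma lifted_split:
  assumes "0 \<le> \<theta>" "\<theta> \<le> 1"
  shows "lifted \<theta> F x = (if x v then \<theta> * lifted_at \<theta> F x v One + (1 - \<theta>) * lifted_at \<theta> F x v Star
    else lifted_at \<theta> F x v Zero)"
  using expect_bernoulli_field_resample[OF assms, of "\<lambda>B. F (lift_with x B)" v]
  by (cases "x v") (simp_all add: lifted_eq lift_with_fun_upd lifted_at_def algebra_simps)

lemma lifted_mono: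
  assumes "mono_on (contr -` admissible \<mu>) F" "x \<le> y" "x \<in> admissible \<mu>" "y \<in> admissible \<mu>"
  shows "lifted \<theta> F x \<le> lifted \<theta> F y"
  unfolding lifted_eq
  by (intro expect_mono mono_onD[OF assms(1)] lift_with_mono) (use assms in auto)

lemma lifted_at_mono:
  assumes "mono_on (contr -` admissible \<mu>) F" "b \<le> c"
    and "x(v := b \<noteq> Zero) \<in> admissible \<mu>" "x(v := c \<noteq> Zero) \<in> admissible \<mu>"
  shows "lifted_at \<theta> F x v b \<le> lifted_at \<theta> F x v c"
  unfolding lifted_at_def
  by (intro expect_mono mono_onD[OF assms(1)]) (use assms(2-4) in \<open>auto simp: le_fun_def\<close>)

section \<open>Single-site kernels\<close>

definition glauber_site :: "('v \<Rightarrow> bool) pmf \<Rightarrow> 'v \<Rightarrow> (('v \<Rightarrow> bool) \<Rightarrow> real) \<Rightarrow> ('v \<Rightarrow> bool) \<Rightarrow> real" where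
  "glauber_site \<mu> v f x = cond1 \<mu> v x * f (x(v := True)) + (1 - cond1 \<mu> v x) * f (x(v := False))"

definition alg_site ::
  "real \<Rightarrow> ('v::finite \<Rightarrow> bool) pmf \<Rightarrow> 'v \<Rightarrow> (('v \<Rightarrow> tri) \<Rightarrow> real) \<Rightarrow> ('v \<Rightarrow> tri) \<Rightarrow> real" where
  "alg_site \<theta> \<mu> v F X = (if X v = Star then F X else
      cond1 (tilt \<theta> \<mu>) v (contr X) * F (X(v := One)) +
      (1 - cond1 (tilt \<theta> \<mu>) v (contr X)) * F (X(v := Zero)))"

lemma expect_glauber_step:
  "expect (glauber_step \<mu> x) f = (\<Sum>v\<in>UNIV. glauber_site \<mu> v f x) / CARD('v)"
  for x :: "'v::finite \<Rightarrow> bool"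
  by (simp add: glauber_step_def glauber_site_def expect_bind expect_uniform expect_bernoulli
      cond1_nonneg cond1_le_1)

lemma expect_alg_step:
  "expect (alg_step \<theta> \<mu> X) F = (\<Sum>v\<in>UNIV. alg_site \<theta> \<mu> v F X) / CARD('v)"
  for X :: "'v::finite \<Rightarrow> tri"
proof -
  have "expect (alg_step \<theta> \<mu> X) F = expect (pmf_of_set UNIV) (\<lambda>v. alg_site \<theta> \<mu> v F X)"
    unfolding alg_step_def expect_bind
    by (intro expect_cong) (auto simp: alg_site_def expect_bind expect_bernoulli cond1_nonneg cond1_le_1)
  then show ?thesis by (simp add: expect_uniform)
qed

text \<open>The monotone coupling of Bernoulli(\<open>p\<close>) and Bernoulli(\<open>q\<close>) charges only the
  outcome pairs (1,1), (0,0) and (0,1), with masses \<open>p\<close>, \<open>1 - q\<close> and \<open>q - p\<close>.\<close>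

lemma bernoulli_mix_mono:
  fixes p q a0 a1 b0 b1 :: real
  assumes "0 \<le> p" "p \<le> q" "q \<le> 1"
    and "0 < p \<Longrightarrow> a1 \<le> b1" "q < 1 \<Longrightarrow> a0 \<le> b0" "p < q \<Longrightarrow> a0 \<le> b1"
  shows "p * a1 + (1 - p) * a0 \<le> q * b1 + (1 - q) * b0"
proof -
  have "0 \<le> p * (b1 - a1)" "0 \<le> (1 - q) * (b0 - a0)" "0 \<le> (q - p) * (b1 - a0)"
    using assms by (cases "p = 0"; cases "q = 1"; cases "p = q"; simp)+
  moreover have "q * b1 + (1 - q) * b0 - (p * a1 + (1 - p) * a0) =
      p * (b1 - a1) + (1 - q) * (b0 - a0) + (q - p) * (b1 - a0)"
    by (simp add: algebra_simps)
  ultimately show ?thesis by linarith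
qed

lemma alg_site_mono:
  assumes mono: "monotone_system \<mu>" and top: "\<forall>v. feasible_at \<mu> v (\<lambda>_. True)" and "0 < \<theta>"
    and F: "mono_on (contr -` admissible \<mu>) F"
    and XY: "X \<le> Y" "contr X \<in> admissible \<mu>" "contr Y \<in> admissible \<mu>"
  shows "alg_site \<theta> \<mu> v F X \<le> alg_site \<theta> \<mu> v F Y"
proof -
  define x y where "x = contr X" and "y = contr Y"
  have fx: "feasible_at \<mu> v x" and fy: "feasible_at \<mu> v y"
    using feasible_at_admissible[OF top] XY by (auto simp: x_def y_def)
  define p q where "p = cond1 (tilt \<theta> \<mu>) v x" and "q = cond1 (tilt \<theta> \<mu>) v y"
  have pq: "0 \<le> p" "p \<le> q" "q \<le> 1"
    using cond1_tilt_mono[OF mono contr_mono[OF XY(1)] _ _ \<open>0 < \<theta>\<close>] fx fy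
    by (auto simp: p_def q_def x_def y_def cond1_nonneg cond1_le_1)
  have adm: "0 < p \<Longrightarrow> x(v := True) \<in> admissible \<mu>" "p < 1 \<Longrightarrow> x(v := False) \<in> admissible \<mu>"
    "0 < q \<Longrightarrow> y(v := True) \<in> admissible \<mu>" "q < 1 \<Longrightarrow> y(v := False) \<in> admissible \<mu>"
    using fx fy \<open>0 < \<theta>\<close>
    by (auto simp: p_def q_def cond1_tilt_pos_iff cond1_tilt_less_1_iff intro: admissibleI)
  have le_upd: "X(v := a) \<le> Y(v := b)" if "a \<le> b" for a b
    using XY(1) that by (auto simp: le_fun_def)
  have FD: "F X' \<le> F Y'" if "X' \<le> Y'" "contr X' \<in> admissible \<mu>" "contr Y' \<in> admissible \<mu>" for X' Y'
    using mono_onD[OF F] that by auto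
  show ?thesis
  proof (cases "X v = Star")
    case True
    then have "Y v = Star" using XY(1) by (metis Star_le_iff le_fun_def)
    then show ?thesis using True FD[OF XY] by (simp add: alg_site_def)
  next
    case XS: False
    show ?thesis
    proof (cases "Y v = Star")
      case True
      have le_Y: "X(v := a) \<le> Y" for a
        using le_upd[of a Star] True by (metis fun_upd_triv le_Star)
      have "p * F (X(v := One)) + (1 - p) * F (X(v := Zero)) \<le> 1 * F Y + (1 - 1) * F Y"
        by (rule bernoulli_mix_mono) (use pq adm le_Y XY(3) in \<open>auto simp: x_def intro!: FD\<close>)
      then show ?thesis using True XS by (simp add: alg_site_def p_def x_def)
    next
      case YS: False
      have "p * F (X(v := One)) + (1 - p) * F (X(v := Zero)) \<le>
          q * F (Y(v := One)) + (1 - q) * F (Y(v := Zero))"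
        by (rule bernoulli_mix_mono[OF pq])
          (use pq adm in \<open>auto simp: x_def y_def less_eq_tri_def intro!: FD le_upd\<close>)
      then show ?thesis using XS YS by (simp add: alg_site_def p_def q_def x_def y_def)
    qed
  qed
qed

lemma alg_step_mono:
  assumes "monotone_system \<mu>" "\<forall>v. feasible_at \<mu> v (\<lambda>_. True)" "0 < \<theta>"
    and "mono_on (contr -` admissible \<mu>) F"
  shows "mono_on (contr -` admissible \<mu>) (\<lambda>X. expect (alg_step \<theta> \<mu> X) F)"
proof (rule mono_onI)
  fix X Y assume "X \<in> contr -` admissible \<mu>" "Y \<in> contr -` admissible \<mu>" "X \<le> Y"
  then have "(\<Sum>v\<in>UNIV. alg_site \<theta> \<mu> v F X) \<le> (\<Sum>v\<in>UNIV. alg_site \<theta> \<mu> v F Y)"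
    by (intro sum_mono alg_site_mono[OF assms]) auto
  then show "expect (alg_step \<theta> \<mu> X) F \<le> expect (alg_step \<theta> \<mu> Y) F"
    by (simp add: expect_alg_step divide_right_mono)
qed

lemma lifted_at_alg_site:
  "lifted_at \<theta> (alg_site \<theta> \<mu> v F) x v b = (if b = Star then lifted_at \<theta> F x v Star
    else cond1 (tilt \<theta> \<mu>) v x * lifted_at \<theta> F x v One +
      (1 - cond1 (tilt \<theta> \<mu>) v x) * lifted_at \<theta> F x v Zero)"
  by (cases b) (simp_all add: lifted_at_def alg_site_def expect_add expect_cmult)

lemma lifted_alg_site:
  assumes "0 \<le> \<theta>" "\<theta> \<le> 1"
  shows "lifted \<theta> (alg_site \<theta> \<mu> v F) x =
    (let c = cond1 (tilt \<theta> \<mu>) v x;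
         m = c * lifted_at \<theta> F x v One + (1 - c) * lifted_at \<theta> F x v Zero
     in if x v then \<theta> * m + (1 - \<theta>) * lifted_at \<theta> F x v Star else m)"
  by (simp add: lifted_split[OF assms, of _ _ v] lifted_at_alg_site Let_def)

lemma lifted_alg_step:
  "lifted \<theta> (\<lambda>X. expect (alg_step \<theta> \<mu> X) F) x = (\<Sum>v\<in>UNIV. lifted \<theta> (alg_site \<theta> \<mu> v F) x) / CARD('v)"
  for x :: "'v::finite \<Rightarrow> bool"
  by (simp add: lifted_def expect_alg_step expect_divide expect_sum)

section \<open>Glauber dynamics preserves increasing likelihood ratios\<close>

definition fiber_mass :: "('v \<Rightarrow> bool) pmf \<Rightarrow> 'v \<Rightarrow> ('v \<Rightarrow> bool) \<Rightarrow> real" where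
  "fiber_mass \<nu> v z = pmf \<nu> (z(v := True)) + pmf \<nu> (z(v := False))"

lemma fiber_mass_fun_upd [simp]: "fiber_mass \<nu> v (z(v := b)) = fiber_mass \<nu> v z"
  by (simp add: fiber_mass_def)

lemma fiber_mass_pos: "0 < pmf \<nu> z \<Longrightarrow> 0 < fiber_mass \<nu> v z"
  unfolding fiber_mass_def
  by (cases "z v") (auto simp: fun_upd_idem intro: add_pos_nonneg add_nonneg_pos)

lemma feasible_at_iff_fiber_mass: "feasible_at \<mu> v z \<longleftrightarrow> 0 < fiber_mass \<mu> v z"
  by (simp add: feasible_at_def fiber_mass_def)

lemma cond1_eq_fiber_mass: "cond1 \<mu> v z = pmf \<mu> (z(v := True)) / fiber_mass \<mu> v z"
  by (simp add: cond1_def fiber_mass_def)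

lemma resample_prob_eq:
  assumes "0 < pmf \<mu> z"
  shows "(if z v then cond1 \<mu> v z else 1 - cond1 \<mu> v z) = pmf \<mu> z / fiber_mass \<mu> v z"
proof -
  have "0 < fiber_mass \<mu> v z" using fiber_mass_pos[OF assms] .
  then show ?thesis
    by (cases "z v") (auto simp: cond1_eq_fiber_mass fun_upd_idem field_simps fiber_mass_def)
qed

text \<open>The ratio \<open>\<nu>/\<mu>\<close> is increasing; it is stated cross-multiplied so that it makes sense
  where \<open>\<mu>\<close> vanishes.\<close>

definition increasing_ratio :: "('v \<Rightarrow> bool) pmf \<Rightarrow> ('v \<Rightarrow> bool) pmf \<Rightarrow> bool" where
  "increasing_ratio \<mu> \<nu> \<longleftrightarrow> set_pmf \<nu> \<subseteq> admissible \<mu> \<and>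
     (\<forall>x y. x \<le> y \<longrightarrow> pmf \<nu> x * pmf \<mu> y \<le> pmf \<nu> y * pmf \<mu> x)"

lemma increasing_ratioD:
  assumes "increasing_ratio \<mu> \<nu>"
  shows "0 < pmf \<nu> z \<Longrightarrow> z \<in> admissible \<mu>"
    and "x \<le> y \<Longrightarrow> pmf \<nu> x * pmf \<mu> y \<le> pmf \<nu> y * pmf \<mu> x"
  using assms by (auto simp: increasing_ratio_def set_pmf_iff)

lemma top_le_iff: "(\<lambda>_. True) \<le> y \<longleftrightarrow> y = (\<lambda>_. True)"
  by (auto simp: le_fun_def fun_eq_iff)

lemma increasing_ratio_return_top: "increasing_ratio \<mu> (return_pmf (\<lambda>_. True))"
  by (auto simp: increasing_ratio_def admissible_def pmf_return indicator_def top_le_iff)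

lemma set_pmf_glauber_step:
  assumes top: "\<forall>v. feasible_at \<mu> v (\<lambda>_. True)" and x: "x \<in> admissible \<mu>"
  shows "set_pmf (glauber_step \<mu> x) \<subseteq> admissible \<mu>"
proof
  fix y assume "y \<in> set_pmf (glauber_step \<mu> x)"
  then obtain v b where y: "y = x(v := b)" and "pmf (bernoulli_pmf (cond1 \<mu> v x)) b \<noteq> 0"
    by (auto simp: glauber_step_def set_pmf_iff)
  then have "if b then 0 < cond1 \<mu> v x else cond1 \<mu> v x < 1"
    using cond1_nonneg[of \<mu> v x] cond1_le_1[of \<mu> v x] by (cases b) auto
  then show "y \<in> admissible \<mu>"
    using feasible_at_admissible[OF top x, of v] unfolding y
    by (cases b) (auto simp: cond1_pos_iff cond1_less_1_iff intro: admissibleI)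
qed

lemma sum_fun_upd_split:
  fixes G :: "('v::finite \<Rightarrow> bool) \<Rightarrow> real"
  shows "(\<Sum>x\<in>UNIV. G x) = (\<Sum>x\<in>{x. \<not> x v}. G x + G (x(v := True)))"
proof -
  have "(\<Sum>x\<in>{x. x v}. G x) = (\<Sum>x\<in>{x. \<not> x v}. G (x(v := True)))"
    by (rule sum.reindex_bij_witness[where j = "\<lambda>x. x(v := False)" and i = "\<lambda>x. x(v := True)"])
      (auto simp: fun_upd_idem)
  moreover have "(\<Sum>x\<in>UNIV. G x) = (\<Sum>x\<in>{x. \<not> x v}. G x) + (\<Sum>x\<in>{x. x v}. G x)"
    by (subst sum.union_disjoint[symmetric]) (auto intro: sum.cong)
  ultimately show ?thesis by (simp add: sum.distrib)
qed

lemma expect_glauber_site_point: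
  fixes \<nu> :: "('v::finite \<Rightarrow> bool) pmf"
  shows "expect \<nu> (glauber_site \<mu> v (\<lambda>z. if z = y then 1 else 0)) =
    fiber_mass \<nu> v y * (if y v then cond1 \<mu> v y else 1 - cond1 \<mu> v y)"
proof -
  define W where "W = (if y v then cond1 \<mu> v y else 1 - cond1 \<mu> v y)"
  have "expect \<nu> (glauber_site \<mu> v (\<lambda>z. if z = y then 1 else 0)) =
      (\<Sum>x\<in>{x. \<not> x v}. if x = y(v := False) then fiber_mass \<nu> v x * W else 0)"
    unfolding expect_def
  proof (subst sum_fun_upd_split[of _ v], intro sum.cong refl)
    fix x assume "x \<in> {x. \<not> x v}"
    then have "x(v := False) = x" by (simp add: fun_upd_idem)
    moreover have "x(v := True) = y \<longleftrightarrow> x = y(v := False) \<and> y v" "x = y \<longleftrightarrow> x = y(v := False) \<and> \<not> y v"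
      using \<open>x \<in> _\<close> by (auto simp: fun_eq_iff)
    ultimately show "pmf \<nu> x * glauber_site \<mu> v (\<lambda>z. if z = y then 1 else 0) x +
        pmf \<nu> (x(v := True)) * glauber_site \<mu> v (\<lambda>z. if z = y then 1 else 0) (x(v := True)) =
        (if x = y(v := False) then fiber_mass \<nu> v x * W else 0)"
      by (cases "x = y(v := False)") (auto simp: glauber_site_def W_def fiber_mass_def algebra_simps)
  qed
  also have "\<dots> = fiber_mass \<nu> v y * W"
    by (cases "y v") (auto simp: sum.delta)
  finally show ?thesis by (simp add: W_def)
qed

lemma pmf_bind_glauber_step:
  fixes \<nu> :: "('v::finite \<Rightarrow> bool) pmf"
  shows "pmf (\<nu> \<bind> glauber_step \<mu>) y =
    (\<Sum>v\<in>UNIV. fiber_mass \<nu> v y * (if y v then cond1 \<mu> v y else 1 - cond1 \<mu> v y)) / CARD('v)"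
  by (simp add: pmf_eq_expect[of "\<nu> \<bind> _"] expect_bind expect_glauber_step expect_divide
      expect_sum expect_glauber_site_point)

text \<open>The ratios \<open>A/p \<le> B/q \<le> D/s\<close> and \<open>A/p \<le> C/r \<le> D/s\<close> of \<open>\<nu>\<close> to \<open>\<mu>\<close> at the corners
  of a square \<open>x\<^sub>0 \<le> x\<^sub>1, y\<^sub>0 \<le> y\<^sub>1\<close>, in cross-multiplied form; \<open>q r \<le> s p\<close> is the
  monotonicity of \<open>\<mu>\<close> along the square.\<close>

lemma mediant_le_mediant:
  fixes p q r s A B C D :: real
  assumes nn: "0 \<le> p" "0 \<le> q" "0 \<le> r" "0 \<le> s" "0 \<le> A" "0 \<le> B" "0 \<le> C" "0 \<le> D"
    and AB: "A * q \<le> B * p" and AC: "A * r \<le> C * p" and AD: "A * s \<le> D * p"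
    and BD: "B * s \<le> D * q" and CD: "C * s \<le> D * r" and cross: "q * r \<le> s * p"
    and "q = 0 \<Longrightarrow> B = 0" and "r = 0 \<Longrightarrow> C = 0"
  shows "(A + B) * (r + s) \<le> (C + D) * (p + q)"
proof -
  have "B * r + A * s \<le> C * q + D * p"
  proof (cases "q = 0 \<or> r = 0 \<or> B * r \<le> C * q")
    case True
    then show ?thesis using assms by (auto simp: mult_nonneg_nonneg add_increasing)
  next
    case False
    then have "0 < q * r" "0 \<le> B * r - C * q" using nn by (auto simp: less_le)
    have "(B * r - C * q) * (q * r) \<le> (B * r - C * q) * (s * p)"
      by (rule mult_left_mono[OF cross \<open>0 \<le> B * r - C * q\<close>])
    also have "\<dots> = (p * r) * (B * s) - (q * s) * (C * p)" by (simp add: algebra_simps)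
    also have "\<dots> \<le> (p * r) * (D * q) - (q * s) * (A * r)"
      using mult_left_mono[OF BD, of "p * r"] mult_left_mono[OF AC, of "q * s"] nn by simp
    also have "\<dots> = (D * p - A * s) * (q * r)" by (simp add: algebra_simps)
    finally show ?thesis using \<open>0 < q * r\<close> by (simp add: mult_le_cancel_right_pos)
  qed
  then show ?thesis using AC BD by (simp add: algebra_simps)
qed

lemma fiber_ratio_mono:
  assumes mono: "monotone_system \<mu>" and \<nu>: "increasing_ratio \<mu> \<nu>"
    and "x \<le> y" "0 < pmf \<mu> x" "0 < pmf \<mu> y"
  shows "fiber_mass \<nu> v x / fiber_mass \<mu> v x \<le> fiber_mass \<nu> v y / fiber_mass \<mu> v y"
proof (cases "x(v := False) = y(v := False)")
  case True
  then have "x(v := b) = y(v := b)" for b by (metis fun_upd_upd)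
  then show ?thesis by (simp add: fiber_mass_def)
next
  case False
  then obtain u where "u \<noteq> v" "\<not> x u"
    using \<open>x \<le> y\<close> by (auto simp: fun_eq_iff le_fun_def split: if_splits)
  then have not_top: "x(v := True) \<noteq> (\<lambda>_. True)" "y(v := False) \<noteq> (\<lambda>_. True)"
    by (auto simp: fun_eq_iff)
  have null: "pmf \<nu> z = 0" if "pmf \<mu> z = 0" "z \<noteq> (\<lambda>_. True)" for z
    using increasing_ratioD(1)[OF \<nu>, of z] that by (auto simp: admissible_def set_pmf_iff less_le)
  have ratio: "pmf \<nu> a * pmf \<mu> b \<le> pmf \<nu> b * pmf \<mu> a" if "a \<le> b" for a b
    using increasing_ratioD(2)[OF \<nu> that] .
  have le_upd: "x(v := b) \<le> y(v := c)" if "b \<le> c" for b c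
    using \<open>x \<le> y\<close> that by (auto simp: le_fun_def)
  have feasible: "feasible_at \<mu> v x" "feasible_at \<mu> v y"
    using assms(4,5) by (simp_all add: feasible_at_iff_fiber_mass fiber_mass_pos)
  have "(pmf \<nu> (x(v := False)) + pmf \<nu> (x(v := True))) * (pmf \<mu> (y(v := False)) + pmf \<mu> (y(v := True)))
      \<le> (pmf \<nu> (y(v := False)) + pmf \<nu> (y(v := True))) * (pmf \<mu> (x(v := False)) + pmf \<mu> (x(v := True)))"
    by (rule mediant_le_mediant[OF _ _ _ _ _ _ _ _ ratio ratio ratio ratio ratio
          monotone_system_cross[OF mono \<open>x \<le> y\<close> feasible]])
      (use \<open>x \<le> y\<close> in \<open>auto simp: le_fun_def le_upd null not_top\<close>)
  moreover have "0 < fiber_mass \<mu> v x" "0 < fiber_mass \<mu> v y"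
    using assms(4,5) by (simp_all add: fiber_mass_pos)
  ultimately show ?thesis
    by (simp add: fiber_mass_def divide_le_eq le_divide_eq algebra_simps)
qed

text \<open>By reversibility of the heat-bath update, \<open>(\<nu> \<bind> glauber_step \<mu>) / \<mu>\<close> at \<open>z\<close> is the
  average over the sites \<open>v\<close> of the fiber ratios, each of them increasing in \<open>z\<close>.\<close>

lemma increasing_ratio_glauber_step:
  fixes \<nu> :: "('v::finite \<Rightarrow> bool) pmf"
  assumes mono: "monotone_system \<mu>" and top: "\<forall>v. feasible_at \<mu> v (\<lambda>_. True)"
    and \<nu>: "increasing_ratio \<mu> \<nu>"
  shows "increasing_ratio \<mu> (\<nu> \<bind> glauber_step \<mu>)"
proof -
  define \<nu>' where "\<nu>' = \<nu> \<bind> glauber_step \<mu>"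
  define h where "h z = (\<Sum>v\<in>UNIV. fiber_mass \<nu> v z / fiber_mass \<mu> v z) / CARD('v)" for z
  have supp: "set_pmf \<nu>' \<subseteq> admissible \<mu>"
    using set_pmf_glauber_step[OF top] \<nu> by (auto simp: \<nu>'_def increasing_ratio_def)
  have \<nu>'_eq: "pmf \<nu>' z = pmf \<mu> z * h z" if "0 < pmf \<mu> z" for z
    using resample_prob_eq[OF that]
    by (simp add: \<nu>'_def h_def pmf_bind_glauber_step sum_distrib_left mult.commute)
  have "pmf \<nu>' x * pmf \<mu> y \<le> pmf \<nu>' y * pmf \<mu> x" if "x \<le> y" for x y
  proof (cases "0 < pmf \<mu> x \<and> 0 < pmf \<mu> y")
    case True
    then have "h x \<le> h y"
      unfolding h_def using fiber_ratio_mono[OF mono \<nu> \<open>x \<le> y\<close>]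
      by (intro divide_right_mono sum_mono) auto
    then show ?thesis
      using True by (simp add: \<nu>'_eq mult_left_mono mult.left_commute)
  next
    case False
    then consider "pmf \<mu> y = 0" | "pmf \<mu> x = 0" by (auto simp: less_le)
    then show ?thesis
    proof cases
      case 2
      then have "pmf \<nu>' x = 0 \<or> x = (\<lambda>_. True)"
        using supp by (auto simp: admissible_def set_pmf_iff)
      then show ?thesis using \<open>x \<le> y\<close> by (auto simp: top_le_iff)
    qed simp
  qed
  then show ?thesis
    using supp by (simp add: increasing_ratio_def \<nu>'_def)
qed

lemma increasing_ratio_glauber:
  assumes "monotone_system \<mu>" "\<forall>v. feasible_at \<mu> v (\<lambda>_. True)"
  shows "increasing_ratio \<mu> (glauber \<mu> t)"
  by (induction t) (simp_all add: increasing_ratio_return_top increasing_ratio_glauber_step[OF assms])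

section \<open>One Glauber step against one algorithm step\<close>

text \<open>Clearing denominators, the right-hand side minus the left-hand side equals
  \<open>(1 - \<theta>) (a\<^sub>1 m\<^sub>0 - a\<^sub>0 m\<^sub>1) ((\<theta> m\<^sub>1 + m\<^sub>0) (M\<^sub>\<star> - M\<^sub>1) + m\<^sub>0 (M\<^sub>1 - M\<^sub>0)) / ((m\<^sub>1 + m\<^sub>0) (\<theta> m\<^sub>1 + m\<^sub>0))\<close>.\<close>

lemma lifted_pair_ineq:
  fixes a0 a1 m0 m1 \<theta> M0 M1 Ms :: real
  assumes \<theta>: "0 < \<theta>" "\<theta> \<le> 1" and "0 \<le> m0" "0 \<le> m1"
    and null: "m1 + m0 = 0 \<Longrightarrow> a0 = 0 \<and> a1 = 0"
    and ratio: "a0 * m1 \<le> a1 * m0"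
    and M1s: "a0 * m1 < a1 * m0 \<Longrightarrow> M1 \<le> Ms"
    and M01: "a0 * m1 < a1 * m0 \<Longrightarrow> 0 < m0 \<Longrightarrow> M0 \<le> M1"
  defines "c \<equiv> m1 / (m1 + m0)" and "t \<equiv> \<theta> * m1 / (\<theta> * m1 + m0)"
  shows "(a0 + a1) * (c * (\<theta> * M1 + (1 - \<theta>) * Ms) + (1 - c) * M0)
    \<le> a0 * (t * M1 + (1 - t) * M0) + a1 * (\<theta> * (t * M1 + (1 - t) * M0) + (1 - \<theta>) * Ms)"
proof (cases "m1 + m0 = 0")
  case False
  then have S: "0 < m1 + m0" using assms(3,4) by simp
  then have T: "0 < \<theta> * m1 + m0" using scaled_sum_pos assms(3,4) \<theta>(1) by blast
  define K where "K = (\<theta> * m1 + m0) * (Ms - M1) + m0 * (M1 - M0)"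
  have "0 \<le> (a1 * m0 - a0 * m1) * K"
  proof (cases "a0 * m1 < a1 * m0")
    case True
    have "0 \<le> m0 * (M1 - M0)" using M01[OF True] assms(3) by (cases "m0 = 0") auto
    then have "0 \<le> K" using M1s[OF True] T by (simp add: K_def)
    then show ?thesis using ratio by simp
  qed (use ratio in simp)
  moreover have "a0 * (t * M1 + (1 - t) * M0) + a1 * (\<theta> * (t * M1 + (1 - t) * M0) + (1 - \<theta>) * Ms)
      - (a0 + a1) * (c * (\<theta> * M1 + (1 - \<theta>) * Ms) + (1 - c) * M0)
      = (1 - \<theta>) * ((a1 * m0 - a0 * m1) * K) / ((m1 + m0) * (\<theta> * m1 + m0))"
    using S T unfolding c_def t_def K_def by (simp add: divide_simps) algebra
  ultimately show ?thesis
    using S T \<theta>(2) by (smt (verit) divide_nonneg_pos mult_nonneg_nonneg mult_pos_pos)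
qed (use null in simp)

text \<open>Pairing \<open>x\<close> with \<open>x(v := True)\<close>, both sides only involve the two \<open>\<nu>\<close>-masses of the
  pair and the three values \<open>lifted_at \<theta> F x v b\<close>, which reduces the claim to
  \<open>lifted_pair_ineq\<close>.\<close>

lemma expect_glauber_site_le:
  fixes \<nu> :: "('v::finite \<Rightarrow> bool) pmf"
  assumes top: "\<forall>v. feasible_at \<mu> v (\<lambda>_. True)" and \<theta>: "0 < \<theta>" "\<theta> < 1"
    and F: "mono_on (contr -` admissible \<mu>) F" and \<nu>: "increasing_ratio \<mu> \<nu>"
  shows "expect \<nu> (glauber_site \<mu> v (lifted \<theta> F)) \<le> expect \<nu> (lifted \<theta> (alg_site \<theta> \<mu> v F))"
  unfolding expect_def
proof (subst (1 2) sum_fun_upd_split[of _ v], intro sum_mono)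
  fix x assume "x \<in> {x. \<not> x v}"
  then have "\<not> x v" and x0: "x(v := False) = x" by (simp_all add: fun_upd_idem)
  define x1 where "x1 = x(v := True)"
  have x1: "x1(v := True) = x1" "x1(v := False) = x" "x \<le> x1" "x1 v"
    using x0 by (auto simp: x1_def le_fun_def)
  define a0 a1 m0 m1 where "a0 = pmf \<nu> x" and "a1 = pmf \<nu> x1" and "m0 = pmf \<mu> x" and "m1 = pmf \<mu> x1"
  define c t where "c = m1 / (m1 + m0)" and "t = \<theta> * m1 / (\<theta> * m1 + m0)"
  define M where "M b = lifted_at \<theta> F x v b" for b
  have \<theta>01: "0 \<le> \<theta>" "\<theta> \<le> 1" using \<theta> by auto
  have M_x1: "lifted_at \<theta> F x1 v b = M b" for b by (simp add: M_def x1_def)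
  have c: "cond1 \<mu> v z = c" if "z \<in> {x, x1}" for z
    using that x0 x1 by (auto simp: cond1_def c_def m0_def m1_def x1_def)
  have t: "cond1 (tilt \<theta> \<mu>) v z = t" if "z \<in> {x, x1}" for z
    using that x0 x1 \<theta> by (auto simp: cond1_tilt t_def m0_def m1_def x1_def)
  have lifted_F: "lifted \<theta> F x = M Zero" "lifted \<theta> F x1 = \<theta> * M One + (1 - \<theta>) * M Star"
    using lifted_split[OF \<theta>01, of F _ v] \<open>\<not> x v\<close> x1 M_x1 by (simp_all add: M_def)
  have lifted_alg: "lifted \<theta> (alg_site \<theta> \<mu> v F) x = t * M One + (1 - t) * M Zero"
    "lifted \<theta> (alg_site \<theta> \<mu> v F) x1 = \<theta> * (t * M One + (1 - t) * M Zero) + (1 - \<theta>) * M Star"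
    using lifted_alg_site[OF \<theta>01, of \<mu> v F] \<open>\<not> x v\<close> x1 t M_x1 by (simp_all add: M_def Let_def)
  have glauber: "glauber_site \<mu> v (lifted \<theta> F) x = c * (\<theta> * M One + (1 - \<theta>) * M Star) + (1 - c) * M Zero"
    "glauber_site \<mu> v (lifted \<theta> F) x1 = c * (\<theta> * M One + (1 - \<theta>) * M Star) + (1 - c) * M Zero"
    using c x0 x1 lifted_F by (auto simp: glauber_site_def x1_def)
  have feasible: "0 < pmf \<nu> z \<Longrightarrow> 0 < m1 + m0" if "z \<in> {x, x1}" for z
    using that feasible_at_admissible[OF top increasing_ratioD(1)[OF \<nu>], of z v] x0
    by (auto simp: feasible_at_def m0_def m1_def x1_def)
  have adm_x1: "x1 \<in> admissible \<mu>" if "a0 * m1 < a1 * m0"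
  proof -
    have "0 \<le> a0 * m1" by (simp add: a0_def m1_def)
    then have "0 < a1" using that pmf_nonneg[of \<nu> x1] by (cases "a1 = 0") (auto simp: a1_def)
    then show ?thesis using increasing_ratioD(1)[OF \<nu>] by (simp add: a1_def)
  qed
  have "(a0 + a1) * (c * (\<theta> * M One + (1 - \<theta>) * M Star) + (1 - c) * M Zero)
    \<le> a0 * (t * M One + (1 - t) * M Zero) + a1 * (\<theta> * (t * M One + (1 - t) * M Zero) + (1 - \<theta>) * M Star)"
    unfolding c_def t_def
  proof (rule lifted_pair_ineq[OF \<theta>(1) \<theta>01(2)])
    show "0 \<le> m0" "0 \<le> m1" by (simp_all add: m0_def m1_def)
    show "m1 + m0 = 0 \<Longrightarrow> a0 = 0 \<and> a1 = 0"
      using feasible[of x] feasible[of x1] by (auto simp: a0_def a1_def less_le)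
    show "a0 * m1 \<le> a1 * m0"
      using increasing_ratioD(2)[OF \<nu> \<open>x \<le> x1\<close>] by (simp add: a0_def a1_def m0_def m1_def)
    show "M One \<le> M Star" if "a0 * m1 < a1 * m0"
      unfolding M_def by (rule lifted_at_mono[OF F]) (use adm_x1[OF that] in \<open>auto simp: x1_def\<close>)
    show "M Zero \<le> M One" if "a0 * m1 < a1 * m0" "0 < m0"
      unfolding M_def using that(2) adm_x1[OF that(1)] x0
      by (intro lifted_at_mono[OF F]) (auto simp: less_eq_tri_def x1_def m0_def intro: admissibleI)
  qed
  then show "pmf \<nu> x * glauber_site \<mu> v (lifted \<theta> F) x +
      pmf \<nu> x1 * glauber_site \<mu> v (lifted \<theta> F) x1 \<le>
      pmf \<nu> x * lifted \<theta> (alg_site \<theta> \<mu> v F) x + pmf \<nu> x1 * lifted \<theta> (alg_site \<theta> \<mu> v F) x1"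
    unfolding glauber lifted_alg a0_def[symmetric] a1_def[symmetric]
    by (simp add: distrib_right)
qed

lemma expect_glauber_step_le:
  fixes \<nu> :: "('v::finite \<Rightarrow> bool) pmf"
  assumes "\<forall>v. feasible_at \<mu> v (\<lambda>_. True)" "0 < \<theta>" "\<theta> < 1"
    and "mono_on (contr -` admissible \<mu>) F" "increasing_ratio \<mu> \<nu>"
  shows "expect \<nu> (\<lambda>x. expect (glauber_step \<mu> x) (lifted \<theta> F))
    \<le> expect \<nu> (lifted \<theta> (\<lambda>X. expect (alg_step \<theta> \<mu> X) F))"
  unfolding expect_glauber_step lifted_alg_step expect_divide expect_sum
  by (intro divide_right_mono sum_mono expect_glauber_site_le[OF assms]) simp

section \<open>Domination of the Glauber chain by the algorithm\<close>

theorem expect_glauber_le_alg: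
  assumes mono: "monotone_system \<mu>" and top: "\<forall>v. feasible_at \<mu> v (\<lambda>_. True)"
    and \<theta>: "0 < \<theta>" "\<theta> < 1" and F: "mono_on (contr -` admissible \<mu>) F"
  shows "expect (glauber \<mu> t) (lifted \<theta> F) \<le> expect (alg \<theta> \<mu> T2 t) F"
  using F
proof (induction t arbitrary: F)
  case 0
  then show ?case by (simp add: lifted_def)
next
  case (Suc t)
  define G where "G = (\<lambda>X. expect (alg_step \<theta> \<mu> X) F)"
  have G: "mono_on (contr -` admissible \<mu>) G"
    unfolding G_def using alg_step_mono[OF mono top \<theta>(1) Suc.prems] .
  \<comment> \<open>Re-lifting at the start of a round does not hurt: \<open>lifted \<theta> G \<circ> contr\<close> is again
    monotone and lifts back to \<open>lifted \<theta> G\<close>.\<close>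
  have relift: "expect (glauber \<mu> t) (lifted \<theta> G) \<le>
      expect (alg \<theta> \<mu> T2 t \<bind> (\<lambda>X. lift \<theta> (contr X))) G"
  proof -
    have "mono_on (contr -` admissible \<mu>) (\<lambda>X. lifted \<theta> G (contr X))"
      by (intro mono_onI lifted_mono[OF G] contr_mono) auto
    from Suc.IH[OF this] show ?thesis
      unfolding expect_bind lifted_def[symmetric] by simp
  qed
  have "expect (glauber \<mu> (Suc t)) (lifted \<theta> F) =
      expect (glauber \<mu> t) (\<lambda>x. expect (glauber_step \<mu> x) (lifted \<theta> F))"
    by (simp add: expect_bind)
  also have "\<dots> \<le> expect (glauber \<mu> t) (lifted \<theta> G)"
    unfolding G_def
    by (rule expect_glauber_step_le[OF top \<theta> Suc.prems increasing_ratio_glauber[OF mono top]])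
  also have "\<dots> \<le> expect (if t mod T2 = 0 then alg \<theta> \<mu> T2 t \<bind> (\<lambda>X. lift \<theta> (contr X))
      else alg \<theta> \<mu> T2 t) G"
    using relift Suc.IH[OF G] by simp
  also have "\<dots> = expect (alg \<theta> \<mu> T2 (Suc t)) F"
    by (simp only: alg.simps expect_bind G_def)
  finally show ?case .
qed

section \<open>Total variation\<close>

lemma tv_dist_le_excess:
  fixes \<nu> \<mu> :: "'a::finite pmf"
  assumes "\<And>x. x \<in> U \<Longrightarrow> pmf \<mu> x \<le> pmf \<nu> x" "\<And>x. x \<notin> U \<Longrightarrow> pmf \<nu> x \<le> pmf \<mu> x"
  shows "tv_dist \<nu> \<mu> \<le> measure_pmf.prob \<nu> U - measure_pmf.prob \<mu> U"
  unfolding tv_dist_def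
proof (rule cSUP_least)
  fix A
  have diff: "measure_pmf.prob \<nu> B - measure_pmf.prob \<mu> B =
      (\<Sum>x\<in>UNIV. indicator B x * (pmf \<nu> x - pmf \<mu> x))" for B
    by (simp add: flip: expect_indicator add: expect_def algebra_simps sum_subtractf)
  have le: "(\<Sum>x\<in>UNIV. indicator B x * (pmf \<nu> x - pmf \<mu> x)) \<le>
      (\<Sum>x\<in>UNIV. indicator U x * (pmf \<nu> x - pmf \<mu> x))" for B
    using assms by (intro sum_mono) (auto simp: indicator_def)
  have compl: "measure_pmf.prob p (- A) = 1 - measure_pmf.prob p A" for p :: "'a pmf"
    by (simp add: measure_pmf.prob_compl[symmetric] Compl_eq_Diff_UNIV)
  show "\<bar>measure_pmf.prob \<nu> A - measure_pmf.prob \<mu> A\<bar> \<le> measure_pmf.prob \<nu> U - measure_pmf.prob \<mu> U"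
    using le[of A] le[of "- A"] diff[of A] diff[of "- A"] diff[of U] compl[of \<nu>] compl[of \<mu>]
    by linarith
qed simp

lemma prob_diff_le_tv_dist:
  fixes p q :: "'a::finite pmf"
  shows "measure_pmf.prob p U - measure_pmf.prob q U \<le> tv_dist p q"
proof -
  have "bdd_above (range (\<lambda>A. \<bar>measure_pmf.prob p A - measure_pmf.prob q A\<bar>))"
    by (rule bdd_above_finite) simp
  then have "\<bar>measure_pmf.prob p U - measure_pmf.prob q U\<bar> \<le> tv_dist p q"
    unfolding tv_dist_def by (rule cSUP_upper[OF UNIV_I])
  then show ?thesis by linarith
qed

lemma increasing_ratio_excess_upward:
  assumes \<nu>: "increasing_ratio \<mu> \<nu>" and "x \<le> y" "x \<in> admissible \<mu>"
    and "pmf \<mu> x < pmf \<nu> x \<or> pmf \<mu> x = 0"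
  shows "pmf \<mu> y < pmf \<nu> y \<or> pmf \<mu> y = 0"
proof (cases "pmf \<mu> x = 0")
  case True
  then have "y = x" using assms(2,3) by (auto simp: admissible_def set_pmf_iff top_le_iff)
  then show ?thesis using True by simp
next
  case False
  then have "0 < pmf \<mu> x" "pmf \<mu> x < pmf \<nu> x" using assms(4) by (auto simp: less_le)
  show ?thesis
  proof (cases "pmf \<mu> y = 0")
    case False
    then have "pmf \<mu> x * pmf \<mu> y < pmf \<nu> x * pmf \<mu> y"
      using \<open>pmf \<mu> x < pmf \<nu> x\<close> by (simp add: less_le)
    also have "\<dots> \<le> pmf \<nu> y * pmf \<mu> x"
      using increasing_ratioD(2)[OF \<nu> \<open>x \<le> y\<close>] .
    finally show ?thesis
      using \<open>0 < pmf \<mu> x\<close> by (simp add: mult.commute)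
  qed simp
qed

theorem lemma3p2:
  fixes \<mu> :: "('v::finite \<Rightarrow> bool) pmf" and \<theta> :: real and T1 T2 t :: nat
  assumes "monotone_system \<mu>"
    and "0 < \<theta>" and "\<theta> < 1" and "1 \<le> T1" and "1 \<le> T2"
    and "\<forall>v. feasible_at \<mu> v (\<lambda>_. True)"
    and "t \<le> T1 * T2"
  shows "tv_dist (glauber \<mu> t) \<mu> \<le> tv_dist (map_pmf contr (alg \<theta> \<mu> T2 t)) \<mu>"
proof -
  define \<nu> where "\<nu> = glauber \<mu> t"
  \<comment> \<open>The \<open>\<mu>\<close>-null configurations are included so that \<open>U\<close> is an up-set even where
    it reaches the all-ones configuration.\<close>
  define U where "U = {x. pmf \<mu> x < pmf \<nu> x \<or> pmf \<mu> x = 0}"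
  have \<nu>: "increasing_ratio \<mu> \<nu>"
    unfolding \<nu>_def using increasing_ratio_glauber[OF assms(1,6)] .
  have "mono_on (contr -` admissible \<mu>) (\<lambda>X. indicator U (contr X) :: real)"
    using increasing_ratio_excess_upward[OF \<nu>]
    by (intro mono_onI) (auto simp: U_def indicator_def dest: contr_mono)
  from expect_glauber_le_alg[OF assms(1,6,2,3) this, of t T2]
  have "measure_pmf.prob \<nu> U \<le> measure_pmf.prob (map_pmf contr (alg \<theta> \<mu> T2 t)) U"
    by (simp add: \<nu>_def expect_map flip: expect_indicator)
  moreover have "tv_dist \<nu> \<mu> \<le> measure_pmf.prob \<nu> U - measure_pmf.prob \<mu> U"
    by (rule tv_dist_le_excess) (auto simp: U_def)
  ultimately show ?thesis
    using prob_diff_le_tv_dist[of "map_pmf contr (alg \<theta> \<mu> T2 t)" U \<mu>] by (simp add: \<nu>_def)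
qed

end
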